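(* Let $\mathbf{A}\in\mathbb{R}^{n\times d}$ be nonzero, and for $\ell\in[m]$ let $\mathbf{r}^{(\ell)}\in\{-1,1\}^n$ and $\boldsymbol{\Omega}^{(\ell)}=\operatorname{diag}(\mathbf{r}^{(\ell)})$. Let $$\mathbf{P}=\big[\mathbf{A}^\top\boldsymbol{\Omega}^{(1)}\,|\,\cdots\,|\,\mathbf{A}^\top\boldsymbol{\Omega}^{(m)}\big]^\top\in\mathbb{R}^{mn\times d}$$ be the constraint matrix of the one-bit polyhedron associated with $\mathbf{A}\mathbf{x}=\mathbf{y}$. Then $\kappa(\mathbf{P})=\kappa(\mathbf{A})$.
   Context: Scaled condition number $\kappa(\mathbf{C})=\|\mathbf{C}\|_{\mathrm F}\|\mathbf{C}^\dagger\|_2$ ($\mathbf{C}^\dagger$ the Moore–Penrose pseudoinverse, $\|\cdot\|_2$ the spectral norm). *)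

theory Defs
  imports "HOL-Analysis.Analysis"
begin

definition frob_norm :: "real^'c^'r \<Rightarrow> real" where
  "frob_norm C = sqrt (\<Sum>i\<in>UNIV. \<Sum>j\<in>UNIV. (C $ i $ j)^2)"

definition spec_norm :: "real^'c^'r \<Rightarrow> real" where
  "spec_norm C = onorm (\<lambda>x. C *v x)"

text \<open>Moore--Penrose pseudoinverse, via the four Penrose conditions.\<close>
definition is_pinv :: "real^'c^'r \<Rightarrow> real^'r^'c \<Rightarrow> bool" where
  "is_pinv C B \<longleftrightarrow> C ** B ** C = C \<and> B ** C ** B = B \<and>
     transpose (C ** B) = C ** B \<and> transpose (B ** C) = B ** C"

definition pinv :: "real^'c^'r \<Rightarrow> real^'r^'c" where
  "pinv C = (THE B. is_pinv C B)"

definition scaled_cond :: "real^'c^'r \<Rightarrow> real" where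
  "scaled_cond C = frob_norm C * spec_norm (pinv C)"

definition diag_mat :: "real^'n \<Rightarrow> real^'n^'n" where
  "diag_mat r = (\<chi> i j. if i = j then r $ i else 0)"

end

theory Submission
  imports Defs
begin

(* Stacking the sign matrices gives P = S A with S = [\<Omega>(1); ...; \<Omega>(m)], and S\<^sup>T S = m I
   because every \<Omega>(l) is diagonal with entries \<plusminus>1.  Hence P = \<surd>m (Q A) for an isometry Q
   (Q\<^sup>T Q = I).  The scaled condition number is invariant under nonzero scalars and under
   isometries: pinv (Q A) = pinv A Q\<^sup>T, the Frobenius norm only sees A\<^sup>T A, and
   \<parallel>B Q\<^sup>T\<parallel>\<^sub>2 = \<parallel>B\<parallel>\<^sub>2. *)

lemma matrix_diff_rdistrib:
  fixes A B :: "real^'c^'r"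
  shows "(A - B) ** C = A ** C - B ** C"
  by (simp add: matrix_matrix_mult_def vec_eq_iff sum_subtractf left_diff_distrib)

lemma inner_matrix_vector_transpose:
  fixes A :: "real^'c^'r"
  shows "inner (A *v x) y = inner x (transpose A *v y)"
  by (metis dot_lmul_matrix vector_transpose_matrix)

lemma matrix_eq_0_if_mult_transpose_eq_0:
  fixes M :: "real^'c^'r"
  assumes "M ** transpose M = 0"
  shows "M = 0"
proof -
  have "inner (row i M) (row i M) = 0" for i
    using arg_cong[OF assms, of "\<lambda>N. N $ i $ i"]
    by (simp add: matrix_mult_transpose_dot_row)
  then show ?thesis
    by (simp add: vec_eq_iff row_def)
qed

lemma matrix_mul_transpose_cancel:
  fixes C :: "real^'c^'r"
  assumes "X ** C ** transpose C = Y ** C ** transpose C"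
  shows "X ** C = Y ** C"
proof -
  let ?M = "X ** C - Y ** C"
  have "?M = (X - Y) ** C"
    by (simp add: matrix_diff_rdistrib)
  then have "?M ** transpose ?M = (X - Y) ** C ** transpose C ** transpose (X - Y)"
    by (simp add: matrix_transpose_mul matrix_mul_assoc)
  also have "\<dots> = 0"
    using assms by (simp add: matrix_diff_rdistrib)
  finally show ?thesis
    using matrix_eq_0_if_mult_transpose_eq_0 by fastforce
qed

lemma exists_left_inverse_on_row_space:
  fixes C :: "real^'c^'r"
  shows "\<exists>G. G ** C ** transpose C = transpose C"
proof -
  let ?S = "range ((*v) (transpose C))"
  have S: "subspace ?S"
    by (rule linear_subspace_image[OF matrix_vector_mul_linear subspace_UNIV])
  have "inj_on ((*v) C) ?S"
    unfolding linear_inj_on_iff_eq_0[OF matrix_vector_mul_linear S]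
  proof (intro ballI impI)
    fix x assume "x \<in> ?S" "C *v x = 0"
    then obtain z where "x = transpose C *v z" by blast
    then have "inner x x = inner z (C *v x)"
      by (simp add: dot_lmul_matrix)
    with \<open>C *v x = 0\<close> show "x = 0" by simp
  qed
  then obtain g where "linear g" and g: "\<And>x. x \<in> ?S \<Longrightarrow> g (C *v x) = x"
    using linear_exists_left_inverse_on[OF matrix_vector_mul_linear S] by blast
  have "matrix g *v y = g y" for y
    using matrix_vector_mul(2)[OF \<open>linear g\<close>] by metis
  then have "matrix g ** C ** transpose C = transpose C"
    unfolding matrix_eq using g by (simp add: matrix_vector_mul_assoc[symmetric])
  then show ?thesis by blast
qed

lemma exists_inverse_with_symmetric_projection:
  fixes C :: "real^'c^'r"
  shows "\<exists>G. C ** G ** C = C \<and> transpose (G ** C) = G ** C"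
proof -
  obtain G where G: "G ** C ** transpose C = transpose C"
    using exists_left_inverse_on_row_space by blast
  then have "C ** G ** C ** transpose C = mat 1 ** C ** transpose C"
    by (metis matrix_mul_assoc matrix_mul_lid)
  then have CGC: "C ** G ** C = C"
    using matrix_mul_transpose_cancel[of "C ** G" C "mat 1"] by simp
  have CCG: "C ** transpose C ** transpose G = C"
    using arg_cong[OF G, of transpose] by (simp add: matrix_transpose_mul matrix_mul_assoc)
  \<comment> \<open>\<open>G' ** C = transpose (G ** C) ** (G ** C)\<close> is a Gram matrix, hence symmetric.\<close>
  define G' where "G' = transpose (G ** C) ** G"
  have "C ** G' ** C = C ** transpose C ** transpose G ** G ** C"
    by (simp add: G'_def matrix_transpose_mul matrix_mul_assoc)
  also have "\<dots> = C"
    using CCG CGC by (simp add: matrix_mul_assoc)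
  finally have "C ** G' ** C = C" .
  moreover have "transpose (G' ** C) = G' ** C"
    by (simp add: G'_def matrix_transpose_mul matrix_mul_assoc)
  ultimately show ?thesis
    by blast
qed

lemma pinv_exists:
  fixes C :: "real^'c^'r"
  shows "\<exists>B. is_pinv C B"
proof -
  obtain G where G: "C ** G ** C = C" "transpose (G ** C) = G ** C"
    using exists_inverse_with_symmetric_projection by blast
  obtain H where H: "transpose C ** H ** transpose C = transpose C"
    "transpose (H ** transpose C) = H ** transpose C"
    using exists_inverse_with_symmetric_projection by blast
  have CH: "C ** transpose H ** C = C" "transpose (C ** transpose H) = C ** transpose H"
    using arg_cong[OF H(1), of transpose] H(2)
    by (simp_all add: matrix_transpose_mul matrix_mul_assoc)
  \<comment> \<open>\<open>G ** C\<close> and \<open>C ** transpose H\<close> are the orthogonal projections onto the row and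
    column spaces of \<open>C\<close>.\<close>
  define B where "B = G ** C ** transpose H"
  have "C ** B = C ** transpose H" "B ** C = G ** C"
    unfolding B_def using G(1) CH(1) by (metis matrix_mul_assoc)+
  then have "is_pinv C B"
    unfolding is_pinv_def using G CH by (metis B_def matrix_mul_assoc)
  then show ?thesis by blast
qed

lemma is_pinv_unique:
  fixes C :: "real^'c^'r"
  assumes "is_pinv C B1" "is_pinv C B2"
  shows "B1 = B2"
proof -
  have pinv1: "C ** B1 ** C = C" "B1 ** C ** B1 = B1" "transpose (C ** B1) = C ** B1"
    "transpose (B1 ** C) = B1 ** C" using assms(1) unfolding is_pinv_def by auto
  have pinv2: "C ** B2 ** C = C" "B2 ** C ** B2 = B2" "transpose (C ** B2) = C ** B2"
    "transpose (B2 ** C) = B2 ** C" using assms(2) unfolding is_pinv_def by auto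
  have B1_C: "B1 ** C = B2 ** C"
  proof -
    have "B1 ** C = transpose (B1 ** C)" using pinv1 by simp
    also have "\<dots> = transpose C ** transpose B1" by (simp add: matrix_transpose_mul)
    also have "\<dots> = transpose (C ** B2 ** C) ** transpose B1" using pinv2 by simp
    also have "\<dots> = transpose (B2 ** C) ** transpose (B1 ** C)"
      by (simp add: matrix_transpose_mul matrix_mul_assoc)
    also have "\<dots> = B2 ** C ** B1 ** C" using pinv1 pinv2 by (simp add: matrix_mul_assoc)
    also have "\<dots> = B2 ** C" using pinv1 by (simp add: matrix_mul_assoc[symmetric])
    finally show ?thesis .
  qed
  have C_B1: "C ** B1 = C ** B2"
  proof -
    have "C ** B1 = transpose (C ** B1)" using pinv1 by simp
    also have "\<dots> = transpose B1 ** transpose C" by (simp add: matrix_transpose_mul)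
    also have "\<dots> = transpose B1 ** transpose (C ** B2 ** C)" using pinv2 by simp
    also have "\<dots> = transpose (C ** B1) ** transpose (C ** B2)"
      by (simp add: matrix_transpose_mul matrix_mul_assoc)
    also have "\<dots> = C ** B1 ** C ** B2" using pinv1 pinv2 by (simp add: matrix_mul_assoc)
    also have "\<dots> = C ** B2" using pinv1 by (simp add: matrix_mul_assoc)
    finally show ?thesis .
  qed
  have "B1 = B1 ** C ** B1" using pinv1 by simp
  also have "\<dots> = B2 ** C ** B2" using B1_C C_B1 by (metis matrix_mul_assoc)
  also have "\<dots> = B2" using pinv2 by simp
  finally show ?thesis .
qed

lemma is_pinv_pinv: "is_pinv C (pinv C)"
  unfolding pinv_def using pinv_exists is_pinv_unique by (metis theI)

lemma pinv_eqI: "is_pinv C B \<Longrightarrow> pinv C = B"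
  using is_pinv_pinv is_pinv_unique by blast

lemma norm_isometry:
  fixes Q :: "real^'c^'r"
  assumes "transpose Q ** Q = mat 1"
  shows "norm (Q *v x) = norm x"
proof -
  have "inner (Q *v x) (Q *v x) = inner x ((transpose Q ** Q) *v x)"
    by (simp only: inner_matrix_vector_transpose matrix_vector_mul_assoc)
  then show ?thesis
    using assms by (simp add: norm_eq_sqrt_inner)
qed

lemma norm_transpose_isometry_le:
  fixes Q :: "real^'c^'r"
  assumes "transpose Q ** Q = mat 1"
  shows "norm (transpose Q *v y) \<le> norm y"
proof -
  have "(norm (transpose Q *v y))\<^sup>2 = inner (Q *v (transpose Q *v y)) y"
    by (simp only: power2_norm_eq_inner inner_matrix_vector_transpose inner_commute
        transpose_transpose)
  also have "\<dots> \<le> norm (Q *v (transpose Q *v y)) * norm y"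
    by (rule norm_cauchy_schwarz)
  also have "\<dots> = norm (transpose Q *v y) * norm y"
    by (simp only: norm_isometry[OF assms])
  finally have "norm (transpose Q *v y) * norm (transpose Q *v y)
      \<le> norm y * norm (transpose Q *v y)"
    by (simp add: power2_eq_square mult.commute)
  then show ?thesis
    by (cases "norm (transpose Q *v y) = 0") (auto dest: mult_right_le_imp_le)
qed

lemma spec_norm_mult_transpose_isometry:
  fixes Q :: "real^'c^'r" and B :: "real^'c^'a"
  assumes "transpose Q ** Q = mat 1"
  shows "spec_norm (B ** transpose Q) = spec_norm B"
proof (rule antisym)
  show "spec_norm (B ** transpose Q) \<le> spec_norm B"
    unfolding spec_norm_def
  proof (rule onorm_le)
    fix y
    have "norm ((B ** transpose Q) *v y) = norm (B *v (transpose Q *v y))"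
      by (simp only: matrix_vector_mul_assoc)
    also have "\<dots> \<le> onorm ((*v) B) * norm (transpose Q *v y)"
      by (rule onorm[OF matrix_vector_mul_bounded_linear])
    also have "\<dots> \<le> onorm ((*v) B) * norm y"
      by (rule mult_left_mono[OF norm_transpose_isometry_le[OF assms]
            onorm_pos_le[OF matrix_vector_mul_bounded_linear]])
    finally show "norm ((B ** transpose Q) *v y) \<le> onorm ((*v) B) * norm y" .
  qed
  show "spec_norm B \<le> spec_norm (B ** transpose Q)"
    unfolding spec_norm_def
  proof (rule onorm_le)
    fix x
    have "norm (B *v x) = norm ((B ** transpose Q) *v (Q *v x))"
      by (simp only: matrix_vector_mul_assoc matrix_mul_assoc[symmetric] assms matrix_mul_rid)
    also have "\<dots> \<le> onorm ((*v) (B ** transpose Q)) * norm (Q *v x)"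
      by (rule onorm[OF matrix_vector_mul_bounded_linear])
    finally show "norm (B *v x) \<le> onorm ((*v) (B ** transpose Q)) * norm x"
      by (simp only: norm_isometry[OF assms])
  qed
qed

lemma frob_norm_eq_sqrt_trace:
  "frob_norm C = sqrt (\<Sum>j\<in>UNIV. (transpose C ** C) $ j $ j)"
proof -
  have "(transpose C ** C) $ j $ j = (\<Sum>i\<in>UNIV. (C $ i $ j)\<^sup>2)" for j
    by (simp add: matrix_matrix_mult_def transpose_def power2_eq_square)
  then show ?thesis
    unfolding frob_norm_def using sum.swap by simp
qed

lemma frob_norm_isometry_mult:
  fixes Q :: "real^'c^'r"
  assumes "transpose Q ** Q = mat 1"
  shows "frob_norm (Q ** C) = frob_norm C"
proof -
  have "transpose (Q ** C) ** (Q ** C) = transpose C ** (transpose Q ** Q) ** C"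
    by (simp add: matrix_transpose_mul matrix_mul_assoc)
  then show ?thesis
    using assms by (simp add: frob_norm_eq_sqrt_trace)
qed

lemma is_pinv_isometry_mult:
  fixes Q :: "real^'c^'r"
  assumes "transpose Q ** Q = mat 1" and "is_pinv C B"
  shows "is_pinv (Q ** C) (B ** transpose Q)"
proof -
  have "Q ** C ** (B ** transpose Q) ** (Q ** C) = Q ** (C ** B ** (transpose Q ** Q) ** C)"
    "B ** transpose Q ** (Q ** C) ** (B ** transpose Q)
      = B ** (transpose Q ** Q) ** C ** B ** transpose Q"
    "Q ** C ** (B ** transpose Q) = Q ** (C ** B) ** transpose Q"
    "B ** transpose Q ** (Q ** C) = B ** (transpose Q ** Q) ** C"
    "transpose (Q ** X ** transpose Q) = Q ** transpose X ** transpose Q" for X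
    by (simp_all add: matrix_mul_assoc matrix_transpose_mul)
  with assms show ?thesis
    unfolding is_pinv_def by simp
qed

lemma scaled_cond_isometry_mult:
  fixes Q :: "real^'c^'r"
  assumes "transpose Q ** Q = mat 1"
  shows "scaled_cond (Q ** C) = scaled_cond C"
proof -
  have "pinv (Q ** C) = pinv C ** transpose Q"
    by (rule pinv_eqI[OF is_pinv_isometry_mult[OF assms is_pinv_pinv]])
  then show ?thesis
    unfolding scaled_cond_def
    using assms by (simp add: frob_norm_isometry_mult spec_norm_mult_transpose_isometry)
qed

lemma is_pinv_scaleR:
  assumes "is_pinv C B"
  shows "is_pinv (a *\<^sub>R C) (inverse a *\<^sub>R B)"
proof (cases "a = 0")
  case False
  with assms show ?thesis
    unfolding is_pinv_def
    by (simp add: matrix_scalar_ac scalar_matrix_assoc[symmetric] transpose_scalar)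
qed (simp add: is_pinv_def transpose_def vec_eq_iff matrix_matrix_mult_def)

lemma frob_norm_scaleR: "frob_norm (a *\<^sub>R C) = \<bar>a\<bar> * frob_norm C"
  unfolding frob_norm_def
  by (simp add: power_mult_distrib sum_distrib_left[symmetric] real_sqrt_mult)

lemma spec_norm_scaleR: "spec_norm (a *\<^sub>R C) = \<bar>a\<bar> * spec_norm C"
proof -
  have "(*v) (a *\<^sub>R C) = (\<lambda>x. a *\<^sub>R (C *v x))"
    by (simp add: fun_eq_iff scaleR_matrix_vector_assoc)
  then show ?thesis
    unfolding spec_norm_def by (simp add: onorm_scaleR matrix_vector_mul_bounded_linear)
qed

lemma scaled_cond_scaleR:
  assumes "a \<noteq> 0"
  shows "scaled_cond (a *\<^sub>R C) = scaled_cond C"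
proof -
  have "pinv (a *\<^sub>R C) = inverse a *\<^sub>R pinv C"
    by (rule pinv_eqI[OF is_pinv_scaleR[OF is_pinv_pinv]])
  then show ?thesis
    using assms by (simp add: scaled_cond_def frob_norm_scaleR spec_norm_scaleR abs_inverse)
qed

lemma scaled_cond_mult_scaled_isometry:
  fixes S :: "real^'c^'r"
  assumes "transpose S ** S = c *\<^sub>R mat 1" and "c > 0"
  shows "scaled_cond (S ** C) = scaled_cond C"
proof -
  define Q where "Q = inverse (sqrt c) *\<^sub>R S"
  have "(inverse (sqrt c))\<^sup>2 * c = 1"
    using assms(2) by (simp add: power_inverse)
  then have "transpose Q ** Q = mat 1"
    using assms(1) by (simp add: Q_def transpose_scalar matrix_scalar_ac
        scalar_matrix_assoc[symmetric] power2_eq_square[symmetric])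
  moreover have "S ** C = sqrt c *\<^sub>R (Q ** C)"
    using assms by (simp add: Q_def scalar_matrix_assoc[symmetric])
  ultimately show ?thesis
    using assms by (simp add: scaled_cond_scaleR scaled_cond_isometry_mult)
qed

definition stacked_diag :: "('m::finite \<Rightarrow> real^'n) \<Rightarrow> real^'n^('m \<times> 'n)" where
  "stacked_diag r = (\<chi> k. diag_mat (r (fst k)) $ snd k)"

lemma stacked_diag_mult:
  "(\<chi> k. (diag_mat (r (fst k)) ** A) $ snd k) = stacked_diag r ** A"
  by (simp add: stacked_diag_def matrix_matrix_mult_def vec_eq_iff)

lemma transpose_stacked_diag_mult_self:
  fixes r :: "'m::finite \<Rightarrow> real^'n"
  assumes "\<And>l i. (r l $ i)\<^sup>2 = 1"
  shows "transpose (stacked_diag r) ** stacked_diag r = real CARD('m) *\<^sub>R mat 1"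
proof -
  let ?S = "stacked_diag r"
  have "(transpose ?S ** ?S) $ i $ j = (real CARD('m) *\<^sub>R mat 1 :: real^'n^'n) $ i $ j" for i j
  proof -
    have "(transpose ?S ** ?S) $ i $ j = (\<Sum>k\<in>UNIV. ?S $ k $ i * ?S $ k $ j)"
      by (simp add: matrix_matrix_mult_def transpose_def)
    also have "\<dots> = (\<Sum>l\<in>UNIV. \<Sum>k\<in>UNIV. ?S $ (l, k) $ i * ?S $ (l, k) $ j)"
      by (simp add: sum.cartesian_product)
    also have "\<dots> = (\<Sum>l\<in>(UNIV::'m set). if i = j then 1 else 0)"
      using assms by (simp add: stacked_diag_def diag_mat_def power2_eq_square
          if_distrib[of "\<lambda>x. x * _"] if_distribR sum.delta cong: if_cong)
    also have "\<dots> = (real CARD('m) *\<^sub>R mat 1 :: real^'n^'n) $ i $ j"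
      by (simp add: mat_def)
    finally show ?thesis .
  qed
  then show ?thesis
    by (simp add: vec_eq_iff)
qed

theorem theorem8:
  fixes A :: "real^'d^'n" and r :: "'m::finite \<Rightarrow> real^'n"
    and P :: "real^'d^('m \<times> 'n)"
  assumes "A \<noteq> 0"
    and "\<And>l i. r l $ i \<in> {-1, 1}"
    and "P = (\<chi> k. (diag_mat (r (fst k)) ** A) $ snd k)"
  shows "scaled_cond P = scaled_cond A"
proof -
  have "(r l $ i)\<^sup>2 = 1" for l i
    using assms(2)[of l i] by auto
  then have "transpose (stacked_diag r) ** stacked_diag r = real CARD('m) *\<^sub>R mat 1"
    by (rule transpose_stacked_diag_mult_self)
  then show ?thesis
    unfolding assms(3) stacked_diag_mult
    by (rule scaled_cond_mult_scaled_isometry) simp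
qed

end
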